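(* For $n \ge 3$ let $Pi_n$ be the graph with vertex set $\{1,\dots,n\}$ in which distinct $i,j$ are adjacent if and only if $(i-j) \bmod n \in \{0,1,\dots,\lfloor n/4\rfloor\}$ or $(j-i) \bmod n \in \{0,1,\dots,\lfloor n/4\rfloor\}$. Then \[ \lim_{n\to\infty}\frac{\lambda_3(Pi_n)}{n} = \frac{1}{\pi}. \]
   Context: $\lambda_3$ denotes the third largest eigenvalue (with multiplicity) of the adjacency matrix. *)

theory Defs
  imports Complex_Main "Jordan_Normal_Form.Char_Poly" "HOL-Library.Multiset"
begin

text \<open>The graph Pi_n on vertices 1..n; matrix index i (0 \<le> i < n) stands for vertex i+1
  (differences, hence adjacency, are unaffected by this shift).\<close>
definition pi_adj :: "nat \<Rightarrow> int \<Rightarrow> int \<Rightarrow> bool" where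
  "pi_adj n i j \<longleftrightarrow> i \<noteq> j \<and>
     ((i - j) mod int n \<in> {0..int n div 4} \<or> (j - i) mod int n \<in> {0..int n div 4})"

definition pi_adj_matrix :: "nat \<Rightarrow> real mat" where
  "pi_adj_matrix n = mat n n (\<lambda>(i, j). if pi_adj n (int i + 1) (int j + 1) then 1 else 0)"

text \<open>Multiset of eigenvalues (with algebraic multiplicity): the roots of the characteristic
  polynomial, which splits over the reals for a real symmetric matrix.\<close>
definition eigenvalues_mset :: "real mat \<Rightarrow> real multiset" where
  "eigenvalues_mset A = (THE M. char_poly A = (\<Prod>a\<in>#M. [:- a, 1:]))"

definition kth_largest_eigenvalue :: "nat \<Rightarrow> real mat \<Rightarrow> real" where
  "kth_largest_eigenvalue k A = rev (sorted_list_of_multiset (eigenvalues_mset A)) ! (k - 1)"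

end

theory Submission
  imports Defs "HOL-Real_Asymp.Real_Asymp"
begin

text \<open>The adjacency matrix of Pi_n is the circulant matrix of the k-th power of the cycle C_n,
  with k = n div 4. The discrete Fourier matrix diagonalises every circulant matrix, so the
  eigenvalues of Pi_n are, by the Dirichlet kernel,
  mu_m = sum_{t=1..k} 2 cos (2 pi t m / n) = sin ((2k+1) pi m / n) / sin (pi m / n) - 1
  for m = 0, ..., n - 1. The largest one is mu_0 = 2k, and mu_1 = mu_{n-1}. Since (2k+1)/n is
  within 1/n of 1/2, mu_1 is at least cot (pi / n) - 1, whereas every mu_m with 0 < m < n is at
  most 1 / sin (pi / n) - 1. So lambda_3 lies between these two bounds, both of which are
  asymptotic to n / pi.\<close>

definition root_of_unity :: "nat \<Rightarrow> int \<Rightarrow> complex" where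
  "root_of_unity n k = cis (2 * pi * of_int k / real n)"

lemma root_of_unity_add: "root_of_unity n (a + b) = root_of_unity n a * root_of_unity n b"
  by (simp add: root_of_unity_def cis_mult add_divide_distrib ring_distribs)

lemma root_of_unity_power: "root_of_unity n a ^ l = root_of_unity n (int l * a)"
  by (simp add: root_of_unity_def DeMoivre mult_ac)

lemma root_of_unity_eq_1_iff:
  assumes "n > 0"
  shows "root_of_unity n a = 1 \<longleftrightarrow> int n dvd a"
proof
  assume "root_of_unity n a = 1"
  hence "cos (2 * pi * of_int a / real n) = 1"
    unfolding root_of_unity_def by (metis Re_complex_of_real cis.sel(1) one_complex.sel(1))
  then obtain q :: int where "2 * pi * of_int a / real n = of_int q * 2 * pi"
    by (auto simp: cos_one_2pi_int)
  hence "real_of_int a = real_of_int (q * int n)" using assms by (simp add: field_simps)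
  hence "a = q * int n" by (simp only: of_int_eq_iff)
  thus "int n dvd a" by simp
next
  assume "int n dvd a"
  then obtain q where "a = int n * q" by blast
  hence "2 * pi * of_int a / real n = 2 * pi * of_int q" using assms by simp
  thus "root_of_unity n a = 1" unfolding root_of_unity_def by (simp add: cis_multiple_2pi)
qed

lemma root_of_unity_mod:
  assumes "n > 0"
  shows "root_of_unity n (a mod int n) = root_of_unity n a"
proof -
  have "root_of_unity n a = root_of_unity n (a mod int n) * root_of_unity n (int n * (a div int n))"
    by (simp flip: root_of_unity_add)
  also have "root_of_unity n (int n * (a div int n)) = 1"
    using assms by (simp add: root_of_unity_eq_1_iff)
  finally show ?thesis by simp
qed

lemma root_of_unity_cong:
  assumes "n > 0" "a mod int n = b mod int n"
  shows "root_of_unity n a = root_of_unity n b"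
  by (metis assms root_of_unity_mod)

lemma sum_root_of_unity:
  assumes "n > 0"
  shows "(\<Sum>l<n. root_of_unity n (int l * a)) = (if int n dvd a then of_nat n else 0)"
proof (cases "int n dvd a")
  case True
  hence "root_of_unity n (int l * a) = 1" for l
    using assms by (simp add: root_of_unity_eq_1_iff)
  thus ?thesis using True by simp
next
  case False
  have "root_of_unity n a ^ n = 1"
    using assms by (simp add: root_of_unity_power root_of_unity_eq_1_iff)
  have "(\<Sum>l<n. root_of_unity n (int l * a)) = (\<Sum>l<n. root_of_unity n a ^ l)"
    by (simp add: root_of_unity_power)
  also have "\<dots> = 0"
    using False assms \<open>root_of_unity n a ^ n = 1\<close> by (simp add: geometric_sum root_of_unity_eq_1_iff)
  finally show ?thesis using False by simp
qed

lemma root_of_unity_add_uminus: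
  "root_of_unity n a + root_of_unity n (- a) = of_real (2 * cos (2 * pi * of_int a / real n))"
  by (simp add: root_of_unity_def complex_eq_iff)

lemma int_dvd_diff_iff_eq:
  assumes "i < n" "j < n"
  shows "int n dvd (int i - int j) \<longleftrightarrow> i = j"
proof
  assume "int n dvd (int i - int j)"
  moreover have "\<bar>int i - int j\<bar> < int n" using assms by linarith
  ultimately show "i = j" using dvd_imp_le_int[of "int i - int j" "int n"] by linarith
qed simp

lemma mod_rotate_inverse:
  fixes i j :: nat
  assumes "i < n"
  shows "((j + n - i) mod n + i) mod n = j mod n"
proof -
  have "((j + n - i) mod n + i) mod n = (j + n - i + i) mod n" by (simp add: mod_add_left_eq)
  also have "j + n - i + i = j + n" using assms by simp
  finally show ?thesis by simp
qed

lemma sum_lessThan_rotate: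
  fixes i n :: nat
  assumes "i < n"
  shows "(\<Sum>j<n. g ((j + n - i) mod n)) = (\<Sum>d<n. g d)"
proof (rule sum.reindex_bij_witness[where i = "\<lambda>d. (d + i) mod n" and j = "\<lambda>j. (j + n - i) mod n"])
  fix j assume "j \<in> {..<n}"
  thus "((j + n - i) mod n + i) mod n = j" using mod_rotate_inverse[OF assms, of j] by simp
next
  fix d assume d: "d \<in> {..<n}"
  have "((d + i) mod n + n - i) mod n = ((d + i) mod n + (n - i)) mod n" using assms by simp
  also have "\<dots> = (d + i + (n - i)) mod n" by (simp add: mod_add_left_eq)
  also have "d + i + (n - i) = d + n" using assms by simp
  finally show "((d + i) mod n + n - i) mod n = d" using d by simp
qed (use assms in auto)

definition circulant_mat :: "nat \<Rightarrow> (nat \<Rightarrow> 'a) \<Rightarrow> 'a mat" where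
  "circulant_mat n c = mat n n (\<lambda>(i, j). c ((j + n - i) mod n))"

definition fourier_mat :: "nat \<Rightarrow> complex mat" where
  "fourier_mat n = mat n n (\<lambda>(i, j). root_of_unity n (int i * int j))"

definition inverse_fourier_mat :: "nat \<Rightarrow> complex mat" where
  "inverse_fourier_mat n = mat n n (\<lambda>(i, j). root_of_unity n (- (int i * int j)) / of_nat n)"

definition circulant_eigenvalue :: "nat \<Rightarrow> (nat \<Rightarrow> complex) \<Rightarrow> nat \<Rightarrow> complex" where
  "circulant_eigenvalue n c m = (\<Sum>d<n. c d * root_of_unity n (int d * int m))"

lemma fourier_mat_inverse:
  assumes "n > 0"
  shows "fourier_mat n * inverse_fourier_mat n = 1\<^sub>m n"
    and "inverse_fourier_mat n * fourier_mat n = 1\<^sub>m n"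
proof -
  have orth: "(\<Sum>l=0..<n. root_of_unity n (int l * (int i - int j))) / of_nat n
      = (if i = j then 1 else 0)" if "i < n" "j < n" for i j
    using that assms by (simp add: atLeast0LessThan sum_root_of_unity int_dvd_diff_iff_eq)
  have orth': "(\<Sum>l=0..<n. root_of_unity n (int l * (int j - int i))) / of_nat n
      = (if i = j then 1 else 0)" if "i < n" "j < n" for i j
    using orth[OF that(2,1)] by simp
  show "fourier_mat n * inverse_fourier_mat n = 1\<^sub>m n"
    by (rule eq_matI) (simp_all add: fourier_mat_def inverse_fourier_mat_def scalar_prod_def
        sum_divide_distrib flip: orth root_of_unity_add, simp_all add: algebra_simps)
  show "inverse_fourier_mat n * fourier_mat n = 1\<^sub>m n"
    by (rule eq_matI) (simp_all add: fourier_mat_def inverse_fourier_mat_def scalar_prod_def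
        sum_divide_distrib flip: orth' root_of_unity_add, simp_all add: algebra_simps)
qed

lemma circulant_mat_carrier [simp]: "circulant_mat n c \<in> carrier_mat n n"
  by (simp add: circulant_mat_def)

lemma fourier_mat_carrier [simp]: "fourier_mat n \<in> carrier_mat n n"
  by (simp add: fourier_mat_def)

lemma inverse_fourier_mat_carrier [simp]: "inverse_fourier_mat n \<in> carrier_mat n n"
  by (simp add: inverse_fourier_mat_def)

lemma circulant_mat_mult_fourier_mat:
  assumes "n > 0"
  shows "circulant_mat n c * fourier_mat n = fourier_mat n * mat_diag n (circulant_eigenvalue n c)"
proof (rule eq_matI)
  fix i m
  assume "i < dim_row (fourier_mat n * mat_diag n (circulant_eigenvalue n c))"
    and "m < dim_col (fourier_mat n * mat_diag n (circulant_eigenvalue n c))"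
  hence i: "i < n" and m: "m < n" by (simp_all add: fourier_mat_def mat_diag_def)
  define \<delta> where "\<delta> j = (j + n - i) mod n" for j
  have shift: "root_of_unity n (int j * int m)
      = root_of_unity n (int (\<delta> j) * int m) * root_of_unity n (int i * int m)" for j
  proof -
    have "int j mod int n = (int (\<delta> j) + int i) mod int n"
      using mod_rotate_inverse[OF i, of j] unfolding \<delta>_def by (metis of_nat_add zmod_int)
    hence "(int j * int m) mod int n = ((int (\<delta> j) + int i) * int m) mod int n"
      by (metis mod_mult_left_eq)
    hence "root_of_unity n (int j * int m) = root_of_unity n ((int (\<delta> j) + int i) * int m)"
      using assms by (intro root_of_unity_cong)
    thus ?thesis by (simp only: distrib_right root_of_unity_add)
  qed
  have "(circulant_mat n c * fourier_mat n) $$ (i, m) = (\<Sum>j<n. c (\<delta> j) * root_of_unity n (int j * int m))"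
    using i m by (simp add: circulant_mat_def fourier_mat_def \<delta>_def scalar_prod_def lessThan_atLeast0)
  also have "\<dots> = (\<Sum>j<n. c (\<delta> j) * root_of_unity n (int (\<delta> j) * int m)) * root_of_unity n (int i * int m)"
    unfolding sum_distrib_right by (intro sum.cong refl) (simp only: mult.assoc flip: shift)
  also have "(\<Sum>j<n. c (\<delta> j) * root_of_unity n (int (\<delta> j) * int m)) = circulant_eigenvalue n c m"
    unfolding \<delta>_def circulant_eigenvalue_def using i by (rule sum_lessThan_rotate)
  also have "circulant_eigenvalue n c m * root_of_unity n (int i * int m)
      = (fourier_mat n * mat_diag n (circulant_eigenvalue n c)) $$ (i, m)"
    using i m by (subst mat_diag_mult_right[OF fourier_mat_carrier]) (simp add: fourier_mat_def)
  finally show "(circulant_mat n c * fourier_mat n) $$ (i, m)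
      = (fourier_mat n * mat_diag n (circulant_eigenvalue n c)) $$ (i, m)" .
qed (simp_all add: circulant_mat_def fourier_mat_def mat_diag_def)

lemma char_poly_circulant_mat:
  assumes "n > 0"
  shows "char_poly (circulant_mat n c) = (\<Prod>m\<leftarrow>[0..<n]. [:- circulant_eigenvalue n c m, 1:])"
proof -
  let ?C = "circulant_mat n c" and ?F = "fourier_mat n" and ?Q = "inverse_fourier_mat n"
    and ?D = "mat_diag n (circulant_eigenvalue n c)"
  have "?C = ?C * (?F * ?Q)"
    using fourier_mat_inverse(1)[OF assms] right_mult_one_mat[OF circulant_mat_carrier[of n c]]
    by simp
  also have "\<dots> = ?F * ?D * ?Q"
    using circulant_mat_mult_fourier_mat[OF assms]
    by (simp add: assoc_mult_mat[of _ n n _ n _ n, symmetric])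
  finally have "?C = ?F * ?D * ?Q" .
  moreover have "{?C, ?D, ?F, ?Q} \<subseteq> carrier_mat n n" by simp
  ultimately have "similar_mat ?C ?D"
    using fourier_mat_inverse[OF assms] by (intro similar_matI) auto
  hence "char_poly ?C = char_poly ?D" by (rule char_poly_similar)
  also have "\<dots> = (\<Prod>a\<leftarrow>diag_mat ?D. [:- a, 1:])"
    by (rule char_poly_upper_triangular[of _ n]) (auto simp: upper_triangular_def mat_diag_def)
  also have "diag_mat ?D = map (circulant_eigenvalue n c) [0..<n]"
    by (intro nth_equalityI) (auto simp: diag_mat_def mat_diag_def)
  finally show ?thesis by (simp add: comp_def)
qed

lemma proots_prod_linear_factors: "proots (\<Prod>a\<in>#M. [:- a, 1:]) = M"
proof (induction M)
  case (add a M)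
  have "(\<Prod>a\<in>#M. [:- a, 1:]) \<noteq> 0" by (auto simp: prod_mset_zero_iff)
  hence "proots ([:- a, 1:] * (\<Prod>a\<in>#M. [:- a, 1:])) = {#a#} + M"
    using add.IH by (subst proots_mult) auto
  thus ?case by simp
qed simp

lemma eigenvalues_mset_eqI:
  assumes "char_poly A = (\<Prod>a\<in>#M. [:- a, 1:])"
  shows "eigenvalues_mset A = M"
  unfolding eigenvalues_mset_def
proof (rule the_equality)
  fix N assume "char_poly A = (\<Prod>a\<in>#N. [:- a, 1:])"
  with assms have "proots (\<Prod>a\<in>#N. [:- a, 1:]) = proots (\<Prod>a\<in>#M. [:- a, 1:])" by simp
  thus "N = M" by (simp only: proots_prod_linear_factors)
qed (fact assms)

lemma eigenvalues_mset_circulant_mat: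
  fixes c \<mu> :: "nat \<Rightarrow> real"
  assumes "n > 0"
    and "\<And>m. m < n \<Longrightarrow> circulant_eigenvalue n (\<lambda>d. of_real (c d)) m = of_real (\<mu> m)"
  shows "eigenvalues_mset (circulant_mat n c) = mset (map \<mu> [0..<n])"
proof (rule eigenvalues_mset_eqI)
  interpret of_real_poly: map_poly_inj_idom_hom "of_real :: real \<Rightarrow> complex" ..
  have "map_mat of_real (circulant_mat n c) = circulant_mat n (\<lambda>d. complex_of_real (c d))"
    by (auto simp: circulant_mat_def)
  hence "map_poly of_real (char_poly (circulant_mat n c))
      = char_poly (circulant_mat n (\<lambda>d. complex_of_real (c d)))"
    by (metis circulant_mat_carrier of_real_hom.char_poly_hom)
  also have "\<dots> = (\<Prod>m\<leftarrow>[0..<n]. [:- of_real (\<mu> m), 1:])"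
    unfolding char_poly_circulant_mat[OF assms(1)]
    by (intro arg_cong[where f = prod_list] map_cong refl) (simp add: assms(2))
  also have "\<dots> = map_poly of_real (\<Prod>m\<leftarrow>[0..<n]. [:- \<mu> m, 1:])"
    by (simp add: of_real_poly.hom_prod_list comp_def)
  finally have "char_poly (circulant_mat n c) = (\<Prod>m\<leftarrow>[0..<n]. [:- \<mu> m, 1:])" by simp
  thus "char_poly (circulant_mat n c) = (\<Prod>a\<in>#mset (map \<mu> [0..<n]). [:- a, 1:])"
    by (simp add: prod_mset_prod_list comp_def flip: mset_map)
qed

definition cycle_power_row :: "nat \<Rightarrow> nat \<Rightarrow> nat \<Rightarrow> real" where
  "cycle_power_row n k d = (if d \<noteq> 0 \<and> (d \<le> k \<or> n - k \<le> d) then 1 else 0)"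

definition cycle_power_eigenvalue :: "nat \<Rightarrow> nat \<Rightarrow> nat \<Rightarrow> real" where
  "cycle_power_eigenvalue n k m = (\<Sum>t=1..k. 2 * cos (2 * pi * (real t * real m) / real n))"

lemma circulant_eigenvalue_cycle_power_row:
  assumes "2 * k < n"
  shows "circulant_eigenvalue n (\<lambda>d. of_real (cycle_power_row n k d)) m
    = of_real (cycle_power_eigenvalue n k m)"
proof -
  let ?w = "\<lambda>d. root_of_unity n (int d * int m)"
  have jumps: "{d \<in> {..<n}. d \<noteq> 0 \<and> (d \<le> k \<or> n - k \<le> d)} = {1..k} \<union> {n-k..<n}"
    using assms by auto
  have "circulant_eigenvalue n (\<lambda>d. of_real (cycle_power_row n k d)) m
      = (\<Sum>d\<in>{1..k} \<union> {n-k..<n}. ?w d)"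
    unfolding circulant_eigenvalue_def cycle_power_row_def jumps[symmetric]
      sum.inter_filter[OF finite_lessThan]
    by (intro sum.cong) simp_all
  also have "\<dots> = (\<Sum>d\<in>{1..k}. ?w d) + (\<Sum>d\<in>{n-k..<n}. ?w d)"
    using assms by (intro sum.union_disjoint) auto
  also have "(\<Sum>d\<in>{n-k..<n}. ?w d) = (\<Sum>t\<in>{1..k}. root_of_unity n (- (int t * int m)))"
  proof (rule sum.reindex_bij_witness[where j = "\<lambda>t. n - t" and i = "\<lambda>d. n - d"])
    fix d assume "d \<in> {n-k..<n}"
    hence "- (int (n - d) * int m) = int d * int m + (- int m) * int n"
      by (simp add: of_nat_diff algebra_simps)
    hence "(- (int (n - d) * int m)) mod int n = (int d * int m) mod int n"
      by (simp only: mod_mult_self1)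
    thus "root_of_unity n (- (int (n - d) * int m)) = ?w d"
      using assms by (intro root_of_unity_cong) auto
  qed (use assms in auto)
  also have "(\<Sum>t\<in>{1..k}. ?w t) + (\<Sum>t\<in>{1..k}. root_of_unity n (- (int t * int m)))
      = (\<Sum>t\<in>{1..k}. of_real (2 * cos (2 * pi * (real t * real m) / real n)))"
    by (simp add: root_of_unity_add_uminus flip: sum.distrib)
  finally show ?thesis by (simp add: cycle_power_eigenvalue_def)
qed

lemma eigenvalues_mset_cycle_power:
  assumes "2 * k < n"
  shows "eigenvalues_mset (circulant_mat n (cycle_power_row n k))
    = mset (map (cycle_power_eigenvalue n k) [0..<n])"
  using assms by (intro eigenvalues_mset_circulant_mat) (simp_all add: circulant_eigenvalue_cycle_power_row)

lemma pi_adj_iff: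
  assumes "i < n" "j < n"
  shows "pi_adj n (int i + 1) (int j + 1)
    \<longleftrightarrow> (j + n - i) mod n \<noteq> 0 \<and> ((j + n - i) mod n \<le> n div 4 \<or> n - n div 4 \<le> (j + n - i) mod n)"
proof -
  have diff_mod: "(int a - int b) mod int n = (if b \<le> a then int a - int b else int a - int b + int n)"
    if "a < n" "b < n" for a b
  proof (cases "b \<le> a")
    case False
    have "(int a - int b) mod int n = (int a - int b + int n) mod int n" by simp
    also have "\<dots> = int a - int b + int n" using that False by (intro mod_pos_pos_trivial) auto
    finally show ?thesis using False by simp
  qed (use that in simp)
  have jump: "(j + n - i) mod n = (if i \<le> j then j - i else j + n - i)"
    using assms by (auto simp: le_mod_geq)
  show ?thesis
    using assms diff_mod[of i j] diff_mod[of j i] unfolding pi_adj_def jump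
    by (auto simp: zdiv_int[symmetric] split: if_splits)
qed

lemma pi_adj_matrix_eq_circulant_mat: "pi_adj_matrix n = circulant_mat n (cycle_power_row n (n div 4))"
  by (rule eq_matI) (simp_all add: pi_adj_matrix_def cycle_power_row_def circulant_mat_def pi_adj_iff)

lemma sin_mult_sum_two_cos:
  "sin x * (\<Sum>t=1..k. 2 * cos (2 * real t * x)) = sin ((2 * real k + 1) * x) - sin x"
proof (induction k)
  case (Suc k)
  have "sin ((2 * real k + 3) * x) - sin ((2 * real k + 1) * x)
      = sin (2 * real (Suc k) * x + x) - sin (2 * real (Suc k) * x - x)"
    by (simp add: algebra_simps)
  also have "\<dots> = sin x * (2 * cos (2 * real (Suc k) * x))"
    by (simp only: sin_add sin_diff) (simp add: algebra_simps)
  finally show ?case using Suc by (simp add: distrib_left algebra_simps)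
qed simp

lemma sin_pi_frac_pos:
  assumes "0 < m" "m < n"
  shows "sin (pi * real m / real n) > 0"
  using assms by (intro sin_gt_zero) (auto simp: field_simps)

lemma cycle_power_eigenvalue_eq:
  assumes "0 < m" "m < n"
  shows "cycle_power_eigenvalue n k m
    = sin ((2 * real k + 1) * (pi * real m / real n)) / sin (pi * real m / real n) - 1"
proof -
  have "cycle_power_eigenvalue n k m = (\<Sum>t=1..k. 2 * cos (2 * real t * (pi * real m / real n)))"
    unfolding cycle_power_eigenvalue_def by (simp add: mult_ac)
  thus ?thesis
    using sin_mult_sum_two_cos[of "pi * real m / real n" k] sin_pi_frac_pos[OF assms]
    by (simp add: field_simps)
qed

lemma cycle_power_eigenvalue_le_0: "cycle_power_eigenvalue n k m \<le> cycle_power_eigenvalue n k 0"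
  unfolding cycle_power_eigenvalue_def by (intro sum_mono) simp

lemma cycle_power_eigenvalue_reflect:
  assumes "m \<le> n" "0 < n"
  shows "cycle_power_eigenvalue n k (n - m) = cycle_power_eigenvalue n k m"
  unfolding cycle_power_eigenvalue_def
proof (intro sum.cong refl)
  fix t
  have "2 * pi * (real t * real (n - m)) / real n = 2 * real t * pi - 2 * pi * (real t * real m) / real n"
    using assms by (simp add: of_nat_diff field_simps)
  thus "2 * cos (2 * pi * (real t * real (n - m)) / real n) = 2 * cos (2 * pi * (real t * real m) / real n)"
    by (simp add: cos_diff)
qed

lemma sin_pi_div_le_sin_pi_frac:
  assumes "0 < m" "m < n"
  shows "sin (pi / real n) \<le> sin (pi * real m / real n)"
proof -
  have mono: "sin (pi / real n) \<le> sin (pi * real a / real n)" if "0 < a" "2 * a \<le> n" for a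
  proof (rule sin_monotone_2pi_le)
    show "- (pi / 2) \<le> pi / real n" using pi_gt_zero divide_nonneg_nonneg[OF pi_ge_zero, of "real n"]
      by linarith
  qed (use that in \<open>auto simp: field_simps\<close>)
  show ?thesis
  proof (cases "2 * m \<le> n")
    case False
    have "sin (pi * real m / real n) = sin (pi - pi * real m / real n)" by simp
    also have "pi - pi * real m / real n = pi * real (n - m) / real n"
      using assms by (simp add: of_nat_diff field_simps)
    finally show ?thesis using mono[of "n - m"] False assms by simp
  qed (use mono assms in simp)
qed

lemma cycle_power_eigenvalue_le:
  assumes "0 < m" "m < n"
  shows "cycle_power_eigenvalue n k m \<le> 1 / sin (pi / real n) - 1"
proof -
  have pos: "sin (pi / real n) > 0" using sin_pi_frac_pos[of 1 n] assms by simp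
  have "sin ((2 * real k + 1) * (pi * real m / real n)) / sin (pi * real m / real n)
      \<le> 1 / sin (pi * real m / real n)"
    using sin_pi_frac_pos[OF assms] by (intro divide_right_mono) auto
  also have "\<dots> \<le> 1 / sin (pi / real n)"
    using sin_pi_div_le_sin_pi_frac[OF assms] pos by (intro divide_left_mono) auto
  finally show ?thesis unfolding cycle_power_eigenvalue_eq[OF assms] by simp
qed

lemma cycle_power_eigenvalue_quarter_ge_cot:
  assumes "1 < n"
  shows "cot (pi / real n) - 1 \<le> cycle_power_eigenvalue n (n div 4) 1"
proof -
  define \<delta> where "\<delta> = (2 * real (n div 4) + 1) * (pi / real n) - pi / 2"
  have "4 * real (n div 4) \<le> real n" "real n \<le> 4 * real (n div 4) + 3" by linarith+
  hence "\<bar>(4 * real (n div 4) + 2 - real n) / (2 * real n)\<bar> \<le> 1 / real n"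
    using assms by (simp add: abs_le_iff field_simps)
  moreover have "\<delta> = pi * ((4 * real (n div 4) + 2 - real n) / (2 * real n))"
    unfolding \<delta>_def using assms by (simp add: field_simps)
  ultimately have "\<bar>\<delta>\<bar> \<le> pi * (1 / real n)"
    by (simp only: abs_mult abs_of_pos[OF pi_gt_zero]) (intro mult_left_mono; simp)
  moreover have "pi / real n \<le> pi" using assms by (simp add: field_simps)
  ultimately have "cos (pi / real n) \<le> cos \<bar>\<delta>\<bar>" by (intro cos_monotone_0_pi_le) auto
  also have "\<dots> = sin ((2 * real (n div 4) + 1) * (pi / real n))"
    unfolding cos_abs_real \<delta>_def by (simp add: sin_add cos_diff)
  finally show ?thesis
    using cycle_power_eigenvalue_eq[of 1 n] sin_pi_frac_pos[of 1 n] assms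
    by (simp add: cot_def divide_right_mono)
qed

lemma size_filter_mset_conv_card:
  "size (filter_mset P (mset xs)) = card {i. i < length xs \<and> P (xs ! i)}"
  by (simp add: length_filter_conv_card flip: mset_filter)

lemma nth_largest_ge:
  fixes M :: "'a::linorder multiset"
  assumes "k < size (filter_mset (\<lambda>v. x \<le> v) M)"
  shows "x \<le> rev (sorted_list_of_multiset M) ! k"
proof (rule ccontr)
  define L where "L = rev (sorted_list_of_multiset M)"
  assume "\<not> x \<le> rev (sorted_list_of_multiset M) ! k"
  hence less: "L ! k < x" unfolding L_def by simp
  have desc: "sorted_wrt (\<ge>) L" unfolding L_def by (simp add: sorted_wrt_rev)
  have "{i. i < length L \<and> x \<le> L ! i} \<subseteq> {..<k}"
  proof safe
    fix i assume i: "i < length L" "x \<le> L ! i"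
    show "i < k"
    proof (rule ccontr)
      assume "\<not> i < k"
      hence "L ! i \<le> L ! k" using desc i by (cases "i = k") (auto simp: sorted_wrt_iff_nth_less)
      thus False using i less by simp
    qed
  qed
  hence "card {i. i < length L \<and> x \<le> L ! i} \<le> k" by (metis card_lessThan card_mono finite_lessThan)
  moreover have "M = mset L" unfolding L_def by simp
  ultimately show False using assms by (simp add: size_filter_mset_conv_card)
qed

lemma nth_largest_le:
  fixes M :: "'a::linorder multiset"
  assumes "k < size M" "size (filter_mset (\<lambda>v. y < v) M) \<le> k"
  shows "rev (sorted_list_of_multiset M) ! k \<le> y"
proof (rule ccontr)
  define L where "L = rev (sorted_list_of_multiset M)"
  assume "\<not> rev (sorted_list_of_multiset M) ! k \<le> y"
  hence greater: "y < L ! k" unfolding L_def by simp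
  have desc: "sorted_wrt (\<ge>) L" unfolding L_def by (simp add: sorted_wrt_rev)
  have M: "M = mset L" unfolding L_def by simp
  have "{..k} \<subseteq> {i. i < length L \<and> y < L ! i}"
  proof safe
    fix i assume "i \<le> k"
    moreover have "k < length L" using assms(1) M by simp
    ultimately show "i < length L" by simp
    have "L ! k \<le> L ! i"
      using desc \<open>i \<le> k\<close> \<open>k < length L\<close> by (cases "i = k") (auto simp: sorted_wrt_iff_nth_less)
    thus "y < L ! i" using greater by simp
  qed
  hence "Suc k \<le> card {i. i < length L \<and> y < L ! i}"
    by (metis card_atMost card_mono finite_Collect_conjI finite_Collect_less_nat)
  thus False using assms(2) M by (simp add: size_filter_mset_conv_card)
qed

lemma pi_adj_matrix_third_eigenvalue_bounds:
  assumes "3 \<le> n"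
  shows "cot (pi / real n) - 1 \<le> kth_largest_eigenvalue 3 (pi_adj_matrix n)"
    and "kth_largest_eigenvalue 3 (pi_adj_matrix n) \<le> 1 / sin (pi / real n) - 1"
proof -
  define \<mu> where "\<mu> = cycle_power_eigenvalue n (n div 4)"
  define M where "M = mset (map \<mu> [0..<n])"
  have third: "kth_largest_eigenvalue 3 (pi_adj_matrix n) = rev (sorted_list_of_multiset M) ! 2"
    unfolding kth_largest_eigenvalue_def pi_adj_matrix_eq_circulant_mat M_def \<mu>_def
    by (subst eigenvalues_mset_cycle_power) (use assms in auto)
  have size_M: "size (filter_mset P M) = card {i. i < n \<and> P (\<mu> i)}" for P
    unfolding M_def size_filter_mset_conv_card by (intro arg_cong[where f = card] Collect_cong) auto
  have "{0, 1, n - 1} \<subseteq> {i. i < n \<and> cot (pi / real n) - 1 \<le> \<mu> i}"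
    using assms cycle_power_eigenvalue_quarter_ge_cot[of n] cycle_power_eigenvalue_le_0[of n "n div 4" 1]
      cycle_power_eigenvalue_reflect[of 1 n "n div 4"]
    unfolding \<mu>_def by auto
  hence "card {0, 1, n - 1} \<le> card {i. i < n \<and> cot (pi / real n) - 1 \<le> \<mu> i}"
    by (intro card_mono) auto
  moreover have "card {0, 1, n - 1} = 3" using assms by simp
  ultimately show "cot (pi / real n) - 1 \<le> kth_largest_eigenvalue 3 (pi_adj_matrix n)"
    unfolding third by (intro nth_largest_ge) (simp add: size_M)
  have "{i. i < n \<and> 1 / sin (pi / real n) - 1 < \<mu> i} \<subseteq> {0}"
    using cycle_power_eigenvalue_le[of _ n "n div 4"] unfolding \<mu>_def by force
  hence "card {i. i < n \<and> 1 / sin (pi / real n) - 1 < \<mu> i} \<le> card {0::nat}"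
    by (intro card_mono) auto
  thus "kth_largest_eigenvalue 3 (pi_adj_matrix n) \<le> 1 / sin (pi / real n) - 1"
    unfolding third using assms by (intro nth_largest_le) (simp add: M_def, simp add: size_M)
qed

theorem theorem3p14:
  shows "(\<lambda>n. kth_largest_eigenvalue 3 (pi_adj_matrix n) / real n) \<longlonglongrightarrow> 1 / pi"
proof (rule real_tendsto_sandwich)
  show "\<forall>\<^sub>F n in sequentially. (cot (pi / real n) - 1) / real n
      \<le> kth_largest_eigenvalue 3 (pi_adj_matrix n) / real n"
    using eventually_ge_at_top[of 3]
    by eventually_elim (simp add: divide_right_mono pi_adj_matrix_third_eigenvalue_bounds)
  show "\<forall>\<^sub>F n in sequentially. kth_largest_eigenvalue 3 (pi_adj_matrix n) / real n
      \<le> (1 / sin (pi / real n) - 1) / real n"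
    using eventually_ge_at_top[of 3]
    by eventually_elim (simp add: divide_right_mono pi_adj_matrix_third_eigenvalue_bounds)
  have "(\<lambda>n. (cot (pi / real n) - 1) / real n) \<longlonglongrightarrow> inverse pi"
    unfolding cot_def by real_asymp
  thus "(\<lambda>n. (cot (pi / real n) - 1) / real n) \<longlonglongrightarrow> 1 / pi"
    by (simp add: inverse_eq_divide)
  have "(\<lambda>n. (1 / sin (pi / real n) - 1) / real n) \<longlonglongrightarrow> inverse pi"
    by real_asymp
  thus "(\<lambda>n. (1 / sin (pi / real n) - 1) / real n) \<longlonglongrightarrow> 1 / pi"
    by (simp add: inverse_eq_divide)
qed

end
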